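(* For every $0<\alpha<1$ there exists $n_0$ such that the following holds. Let $G$ be a digraph on $n\ge n_0$ vertices with $\delta^0(G)\ge\alpha n$ and let $M$ be any matching in the complete graph on $V(G)$. Then there is a set $S\subseteq V(G)$ such that: (i) $n/3\le|S|\le 2n/3$; (ii) every $x\in V(G)$ satisfies $d^+_S(x),d^-_S(x),d^+_{\overline S}(x),d^-_{\overline S}(x)\ge\alpha n/6$, where $\overline S=V(G)\setminus S$; (iii) $S$ does not separate $M$.
   Context: $\delta^0(G)=\min\{\delta^+(G),\delta^-(G)\}$. For $S\subseteq V(G)$, $d^\pm_S(x)=|N^\pm_G(x)\cap S|$. A set $S$ separates a matching $M$ (in the complete graph on $V(G)$) if some edge of $M$ has exactly one endvertex in $S$. *)

theory Defs
  imports Complex_Main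
begin

definition digraph :: "'a set \<Rightarrow> ('a \<times> 'a) set \<Rightarrow> bool" where
  "digraph V E \<longleftrightarrow> finite V \<and> E \<subseteq> V \<times> V \<and> (\<forall>x. (x, x) \<notin> E)"

definition outdeg_in :: "('a \<times> 'a) set \<Rightarrow> 'a set \<Rightarrow> 'a \<Rightarrow> nat" where
  "outdeg_in E S x = card {y \<in> S. (x, y) \<in> E}"

definition indeg_in :: "('a \<times> 'a) set \<Rightarrow> 'a set \<Rightarrow> 'a \<Rightarrow> nat" where
  "indeg_in E S x = card {y \<in> S. (y, x) \<in> E}"

text \<open>Minimum semidegree delta^0(G) = min(delta^+, delta^-) (for nonempty V).\<close>
definition min_semidegree :: "'a set \<Rightarrow> ('a \<times> 'a) set \<Rightarrow> nat" where
  "min_semidegree V E = min (Min ((outdeg_in E V) ` V)) (Min ((indeg_in E V) ` V))"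

definition is_matching_on :: "'a set \<Rightarrow> 'a set set \<Rightarrow> bool" where
  "is_matching_on V M \<longleftrightarrow> (\<forall>e \<in> M. e \<subseteq> V \<and> card e = 2) \<and>
     (\<forall>e \<in> M. \<forall>f \<in> M. e \<noteq> f \<longrightarrow> e \<inter> f = {})"

definition separates :: "'a set \<Rightarrow> 'a set set \<Rightarrow> bool" where
  "separates S M \<longleftrightarrow> (\<exists>e \<in> M. card (e \<inter> S) = 1)"

end

theory Submission
  imports Defs "HOL-Probability.Probability" "HOL-Real_Asymp.Real_Asymp"
begin

(*
  Split V into the edges of M and the singletons of unmatched vertices, and put each part into S
  independently with a fair coin; such an S never separates M. For a fixed N \<subseteq> V, |N \<inter> S| is
  a sum of independent variables with values in [0, 2] and mean |N|/2, so by Hoeffding's inequality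
  it misses |N|/2 by at least \<alpha>n/6 with probability at most 2 exp(-\<alpha>\<^sup>2n/72). A union bound
  over V and the 2n in- and out-neighbourhoods shows that, for large n, some outcome splits all of
  them within \<alpha>n/6 of evenly; this gives the size bounds, and the degree bounds because every
  neighbourhood has at least \<alpha>n vertices.
*)

lemma card_partition_on_le:
  assumes "finite A" "partition_on A P"
  shows "card P \<le> card A"
proof -
  have fin: "finite p" if "p \<in> P" for p
    using assms(1) partition_onD1[OF assms(2)] that by (auto intro: finite_subset)
  have "card P = (\<Sum>p\<in>P. 1)" by simp
  also have "\<dots> \<le> (\<Sum>p\<in>P. card p)"
    using assms fin partition_onD3[OF assms(2)]
    by (intro sum_mono) (metis One_nat_def Suc_leI card_gt_0_iff)
  also have "\<dots> = card A" using product_partition[OF assms(2) fin] by simp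
  finally show ?thesis .
qed

lemma part_Int_Union_selected:
  assumes "partition_on A P" "p \<in> P"
  shows "p \<inter> \<Union>{q\<in>P. f q} = (if f p then p else {})"
  using assms unfolding partition_on_def disjoint_def by auto (metis IntI empty_iff)

lemma card_Int_Union_selected:
  assumes "finite A" "partition_on A P"
  shows "card (N \<inter> \<Union>{p\<in>P. f p}) = (\<Sum>p\<in>P. if f p then card (N \<inter> p) else 0)"
proof -
  have "card (N \<inter> \<Union>{p\<in>P. f p}) = card (\<Union>p\<in>{p\<in>P. f p}. N \<inter> p)"
    by (intro arg_cong[where f = card]) auto
  also have "\<dots> = (\<Sum>p\<in>{p\<in>P. f p}. card (N \<inter> p))"
    using assms finite_elements[OF assms] partition_onD1[OF assms(2)]
    by (intro card_UN_disjoint) (auto simp: partition_on_def disjoint_def intro: finite_subset)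
  also have "\<dots> = (\<Sum>p\<in>P. if f p then card (N \<inter> p) else 0)"
    using finite_elements[OF assms] by (simp add: sum.inter_filter)
  finally show ?thesis .
qed

lemma card_eq_sum_card_Int_parts:
  assumes "finite A" "partition_on A P" "N \<subseteq> A"
  shows "card N = (\<Sum>p\<in>P. card (N \<inter> p))"
  using card_Int_Union_selected[OF assms(1,2), of N "\<lambda>_. True"] assms(3) partition_onD1[OF assms(2)]
  by (simp add: Int_absorb2)

definition matching_parts :: "'a set \<Rightarrow> 'a set set \<Rightarrow> 'a set set" where
  "matching_parts V M = M \<union> (\<lambda>v. {v}) ` (V - \<Union>M)"

lemma partition_on_matching_parts:
  assumes "is_matching_on V M"
  shows "partition_on V (matching_parts V M)"
proof (rule partition_onI)
  have edges: "e \<subseteq> V" "e \<noteq> {}" if "e \<in> M" for e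
    using assms that unfolding is_matching_on_def by (auto simp: card_gt_0_iff[symmetric])
  then show "\<Union>(matching_parts V M) = V" "{} \<notin> matching_parts V M"
    unfolding matching_parts_def by auto
  have "\<forall>e\<in>M. \<forall>f\<in>M. e \<noteq> f \<longrightarrow> e \<inter> f = {}" using assms unfolding is_matching_on_def by blast
  then show "disjnt p q" if "p \<in> matching_parts V M" "q \<in> matching_parts V M" "p \<noteq> q" for p q
    using that unfolding matching_parts_def disjnt_def by fast
qed

lemma card_matching_parts_le_2:
  assumes "is_matching_on V M" "p \<in> matching_parts V M"
  shows "card p \<le> 2"
  using assms unfolding is_matching_on_def matching_parts_def by auto

lemma not_separates_Union_selected_matching_parts:
  assumes "is_matching_on V M"
  shows "\<not> separates (\<Union>{p \<in> matching_parts V M. f p}) M"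
proof -
  have "card (e \<inter> \<Union>{p \<in> matching_parts V M. f p}) \<noteq> 1" if "e \<in> M" for e
  proof -
    have "e \<in> matching_parts V M" using that unfolding matching_parts_def by blast
    then have "e \<inter> \<Union>{p \<in> matching_parts V M. f p} = (if f e then e else {})"
      by (rule part_Int_Union_selected[OF partition_on_matching_parts[OF assms]])
    moreover have "card e = 2" using that assms unfolding is_matching_on_def by blast
    ultimately show ?thesis by simp
  qed
  then show ?thesis unfolding separates_def by blast
qed

abbreviation fair_coins :: "'b set \<Rightarrow> ('b \<Rightarrow> bool) pmf" where
  "fair_coins I \<equiv> Pi_pmf I False (\<lambda>_. bernoulli_pmf (1/2))"

lemma prob_fair_coins_weighted_sum_deviation:
  fixes w :: "'b \<Rightarrow> real" and c :: real
  assumes fin: "finite I" and "I \<noteq> {}" and "c > 0" and w: "\<And>i. i \<in> I \<Longrightarrow> w i \<in> {0..c}"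
    and "\<epsilon> \<ge> 0"
  shows "measure_pmf.prob (fair_coins I)
           {f. \<bar>(\<Sum>i\<in>I. if f i then w i else 0) - (\<Sum>i\<in>I. w i) / 2\<bar> \<ge> \<epsilon>}
         \<le> 2 * exp (- 2 * \<epsilon>\<^sup>2 / (card I * c\<^sup>2))"
proof -
  have expectation: "measure_pmf.expectation (fair_coins I) (\<lambda>f. if f i then w i else 0) = w i / 2"
    if "i \<in> I" for i
  proof -
    have "measure_pmf.expectation (fair_coins I) (\<lambda>f. if f i then w i else 0) =
        measure_pmf.expectation (map_pmf (\<lambda>f. f i) (fair_coins I)) (\<lambda>b. if b then w i else 0)"
      by simp
    also have "map_pmf (\<lambda>f. f i) (fair_coins I) = bernoulli_pmf (1/2)"
      using that fin by (simp add: Pi_pmf_component)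
    finally show ?thesis by simp
  qed
  interpret Hoeffding_ineq "measure_pmf (fair_coins I)" I "\<lambda>i f. if f i then w i else 0"
    "\<lambda>_. 0" "\<lambda>_. c" "(\<Sum>i\<in>I. w i) / 2"
  proof unfold_locales
    show "prob_space.indep_vars (fair_coins I) (\<lambda>_. borel) (\<lambda>i f. if f i then w i else 0) I"
      by (intro prob_space.indep_vars_compose2[OF _ indep_vars_Pi_pmf[OF fin]])
         (auto simp: measure_pmf.prob_space_axioms)
    show "(\<Sum>i\<in>I. w i) / 2 \<equiv> (\<Sum>i\<in>I. measure_pmf.expectation (fair_coins I) (\<lambda>f. if f i then w i else 0))"
      by (simp add: expectation sum_divide_distrib)
  qed (use fin w \<open>c > 0\<close> in auto)
  have "(\<Sum>i\<in>I. (c - 0)\<^sup>2) = card I * c\<^sup>2" by simp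
  moreover have "card I * c\<^sup>2 > 0" using assms by (simp add: card_gt_0_iff)
  ultimately show ?thesis using Hoeffding_ineq_abs_ge[OF \<open>\<epsilon> \<ge> 0\<close>] by simp
qed

lemma prob_fair_coins_trace_deviation:
  assumes "finite A" "A \<noteq> {}" "partition_on A P" "\<forall>p\<in>P. card p \<le> 2" "N \<subseteq> A" "\<epsilon> \<ge> 0"
  shows "measure_pmf.prob (fair_coins P)
           {f. \<epsilon> \<le> \<bar>real (card (N \<inter> \<Union>{p\<in>P. f p})) - card N / 2\<bar>}
         \<le> 2 * exp (- \<epsilon>\<^sup>2 / (2 * card A))"
proof -
  have finP: "finite P" using finite_elements[OF assms(1,3)] .
  have "P \<noteq> {}" using assms(2) partition_onD1[OF assms(3)] by auto
  then have "card P > 0" using finP by (simp add: card_gt_0_iff)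
  have weight: "real (card (N \<inter> p)) \<in> {0..2}" if "p \<in> P" for p
  proof -
    have "finite p" using assms(1) partition_onD1[OF assms(3)] that by (auto intro: finite_subset)
    then have "card (N \<inter> p) \<le> card p" by (intro card_mono) auto
    then show ?thesis using assms(4) that by auto
  qed
  have "real (card (N \<inter> \<Union>{p\<in>P. f p})) = (\<Sum>p\<in>P. if f p then real (card (N \<inter> p)) else 0)" for f
    unfolding card_Int_Union_selected[OF assms(1,3)] of_nat_sum by (intro sum.cong) auto
  moreover have "real (card N) = (\<Sum>p\<in>P. real (card (N \<inter> p)))"
    unfolding card_eq_sum_card_Int_parts[OF assms(1,3,5)] of_nat_sum ..
  ultimately have "measure_pmf.prob (fair_coins P)
           {f. \<epsilon> \<le> \<bar>real (card (N \<inter> \<Union>{p\<in>P. f p})) - card N / 2\<bar>}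
         \<le> 2 * exp (- 2 * \<epsilon>\<^sup>2 / (card P * 2\<^sup>2))"
    using prob_fair_coins_weighted_sum_deviation[OF finP \<open>P \<noteq> {}\<close> _ weight \<open>\<epsilon> \<ge> 0\<close>]
    by (simp only:) simp
  also have "- 2 * \<epsilon>\<^sup>2 / (card P * 2\<^sup>2) = - (\<epsilon>\<^sup>2 / (2 * card P))" by simp
  also have "\<epsilon>\<^sup>2 / (2 * card A) \<le> \<epsilon>\<^sup>2 / (2 * card P)"
    using card_partition_on_le[OF assms(1,3)] \<open>card P > 0\<close> by (intro frac_le) auto
  then have "2 * exp (- (\<epsilon>\<^sup>2 / (2 * card P))) \<le> 2 * exp (- \<epsilon>\<^sup>2 / (2 * card A))" by simp
  finally show ?thesis .
qed

lemma exists_selection_balancing_family: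
  assumes "finite A" "A \<noteq> {}" "partition_on A P" "\<forall>p\<in>P. card p \<le> 2"
    and "finite \<N>" "\<forall>N\<in>\<N>. N \<subseteq> A" "\<epsilon> \<ge> 0"
    and "2 * card \<N> * exp (- \<epsilon>\<^sup>2 / (2 * card A)) < 1"
  shows "\<exists>f. \<forall>N\<in>\<N>. \<bar>real (card (N \<inter> \<Union>{p\<in>P. f p})) - card N / 2\<bar> < \<epsilon>"
proof -
  define bad where "bad N = {f. \<epsilon> \<le> \<bar>real (card (N \<inter> \<Union>{p\<in>P. f p})) - card N / 2\<bar>}" for N
  have "measure_pmf.prob (fair_coins P) (\<Union>N\<in>\<N>. bad N) \<le> (\<Sum>N\<in>\<N>. measure_pmf.prob (fair_coins P) (bad N))"
    using assms(5) by (rule measure_pmf.finite_measure_subadditive_finite) auto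
  also have "\<dots> \<le> (\<Sum>N\<in>\<N>. 2 * exp (- \<epsilon>\<^sup>2 / (2 * card A)))"
    unfolding bad_def using assms(1-4,6,7) by (intro sum_mono prob_fair_coins_trace_deviation) auto
  also have "\<dots> < 1" using assms(8) by simp
  finally have "(\<Union>N\<in>\<N>. bad N) \<noteq> UNIV" by auto
  then obtain f where "f \<notin> (\<Union>N\<in>\<N>. bad N)" by blast
  then have "\<forall>N\<in>\<N>. \<bar>real (card (N \<inter> \<Union>{p\<in>P. f p})) - card N / 2\<bar> < \<epsilon>"
    by (auto simp: bad_def not_le)
  then show ?thesis by blast
qed

lemma outdeg_in_eq_card_Image: "outdeg_in E S x = card (E `` {x} \<inter> S)"
  unfolding outdeg_in_def by (intro arg_cong[where f = card]) auto

lemma indeg_in_eq_card_Image: "indeg_in E S x = card (E\<inverse> `` {x} \<inter> S)"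
  unfolding indeg_in_def by (intro arg_cong[where f = card]) auto

lemma min_semidegree_le_outdeg_in: "finite V \<Longrightarrow> x \<in> V \<Longrightarrow> min_semidegree V E \<le> outdeg_in E V x"
  unfolding min_semidegree_def by (simp add: min.coboundedI1)

lemma min_semidegree_le_indeg_in: "finite V \<Longrightarrow> x \<in> V \<Longrightarrow> min_semidegree V E \<le> indeg_in E V x"
  unfolding min_semidegree_def by (simp add: min.coboundedI2)

lemma card_Int_Diff_gt_of_balanced:
  fixes d :: real
  assumes "finite N" "d \<le> card N" "\<bar>real (card (N \<inter> S)) - card N / 2\<bar> < d / 6"
  shows "d / 3 < card (N \<inter> S)" "d / 3 < card (N - S)"
proof -
  have "real (card N) = card (N \<inter> S) + card (N - S)"
    using card_Int_Diff[OF assms(1), of S] by simp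
  then show "d / 3 < card (N \<inter> S)" "d / 3 < card (N - S)" using assms(2,3) by linarith+
qed

definition neighbourhood_family :: "'a set \<Rightarrow> ('a \<times> 'a) set \<Rightarrow> 'a set set" where
  "neighbourhood_family V E = insert V ((\<lambda>x. E `` {x}) ` V \<union> (\<lambda>x. E\<inverse> `` {x}) ` V)"

lemma card_neighbourhood_family_le:
  assumes "finite V"
  shows "card (neighbourhood_family V E) \<le> 1 + 2 * card V"
proof -
  have "card (neighbourhood_family V E) \<le> Suc (card ((\<lambda>x. E `` {x}) ` V \<union> (\<lambda>x. E\<inverse> `` {x}) ` V))"
    unfolding neighbourhood_family_def by (simp add: card_insert_if assms)
  also have "\<dots> \<le> Suc (card ((\<lambda>x. E `` {x}) ` V) + card ((\<lambda>x. E\<inverse> `` {x}) ` V))"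
    using card_Un_le by simp
  also have "\<dots> \<le> 1 + 2 * card V"
    using card_image_le[OF assms, of "\<lambda>x. E `` {x}"] card_image_le[OF assms, of "\<lambda>x. E\<inverse> `` {x}"]
    by linarith
  finally show ?thesis .
qed

lemma neighbourhood_family_subset: "digraph V E \<Longrightarrow> N \<in> neighbourhood_family V E \<Longrightarrow> N \<subseteq> V"
  unfolding digraph_def neighbourhood_family_def by auto

lemma semidegrees_into_balanced_split:
  fixes \<alpha> :: real
  assumes G: "digraph V E" and "x \<in> V" and "0 \<le> \<alpha>"
    and deg: "real (min_semidegree V E) \<ge> \<alpha> * real (card V)"
    and bal: "\<forall>N\<in>neighbourhood_family V E. \<bar>real (card (N \<inter> S)) - card N / 2\<bar> < \<alpha> * card V / 6"
  shows "real (outdeg_in E S x) \<ge> \<alpha> * real (card V) / 6 \<and>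
         real (indeg_in E S x) \<ge> \<alpha> * real (card V) / 6 \<and>
         real (outdeg_in E (V - S) x) \<ge> \<alpha> * real (card V) / 6 \<and>
         real (indeg_in E (V - S) x) \<ge> \<alpha> * real (card V) / 6"
proof -
  have finV: "finite V" using G unfolding digraph_def by blast
  have split: "\<alpha> * card V / 6 \<le> card (N \<inter> S) \<and> \<alpha> * card V / 6 \<le> card (N \<inter> (V - S))"
    if "N \<in> neighbourhood_family V E" "\<alpha> * card V \<le> card (N \<inter> V)" for N
  proof -
    have "N \<subseteq> V" using neighbourhood_family_subset[OF G that(1)] .
    then have "finite N" "N \<inter> V = N" "N \<inter> (V - S) = N - S" using finV by (auto intro: finite_subset)
    with card_Int_Diff_gt_of_balanced[of N "\<alpha> * card V" S] that bal
    have "\<alpha> * card V / 3 < card (N \<inter> S)" "\<alpha> * card V / 3 < card (N \<inter> (V - S))" by auto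
    moreover have "0 \<le> \<alpha> * card V" using \<open>0 \<le> \<alpha>\<close> by simp
    ultimately show ?thesis by linarith
  qed
  have "E `` {x} \<in> neighbourhood_family V E" "E\<inverse> `` {x} \<in> neighbourhood_family V E"
    unfolding neighbourhood_family_def using \<open>x \<in> V\<close> by auto
  moreover have "\<alpha> * card V \<le> card (E `` {x} \<inter> V)" "\<alpha> * card V \<le> card (E\<inverse> `` {x} \<inter> V)"
    using deg min_semidegree_le_outdeg_in[OF finV \<open>x \<in> V\<close>, of E]
      min_semidegree_le_indeg_in[OF finV \<open>x \<in> V\<close>, of E]
    unfolding outdeg_in_eq_card_Image indeg_in_eq_card_Image by simp_all
  ultimately show ?thesis using split unfolding outdeg_in_eq_card_Image indeg_in_eq_card_Image by blast
qed

lemma exists_balanced_split_not_separating: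
  fixes \<alpha> :: real
  assumes G: "digraph V E" and "V \<noteq> {}" and "0 \<le> \<alpha>" "\<alpha> \<le> 1"
    and deg: "real (min_semidegree V E) \<ge> \<alpha> * real (card V)" and M: "is_matching_on V M"
    and small: "(2 + 4 * real (card V)) * exp (- (\<alpha>\<^sup>2 / 72) * real (card V)) < 1"
  shows "\<exists>S \<subseteq> V.
           real (card V) / 3 \<le> real (card S) \<and> real (card S) \<le> 2 * real (card V) / 3 \<and>
           (\<forall>x \<in> V.
              real (outdeg_in E S x) \<ge> \<alpha> * real (card V) / 6 \<and>
              real (indeg_in E S x) \<ge> \<alpha> * real (card V) / 6 \<and>
              real (outdeg_in E (V - S) x) \<ge> \<alpha> * real (card V) / 6 \<and>
              real (indeg_in E (V - S) x) \<ge> \<alpha> * real (card V) / 6) \<and>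
           \<not> separates S M"
proof -
  define n where "n = card V"
  have finV: "finite V" using G unfolding digraph_def by blast
  have "n > 0" using finV \<open>V \<noteq> {}\<close> unfolding n_def by (simp add: card_gt_0_iff)
  then have "- (\<alpha> * n / 6)\<^sup>2 / (2 * n) = - (\<alpha>\<^sup>2 / 72) * n"
    by (simp add: power2_eq_square field_simps)
  then have "2 * card (neighbourhood_family V E) * exp (- (\<alpha> * n / 6)\<^sup>2 / (2 * n))
      = 2 * card (neighbourhood_family V E) * exp (- (\<alpha>\<^sup>2 / 72) * n)"
    by simp
  also have "\<dots> \<le> (2 + 4 * n) * exp (- (\<alpha>\<^sup>2 / 72) * n)"
    using card_neighbourhood_family_le[OF finV, of E] unfolding n_def by (intro mult_right_mono) auto
  finally have "2 * card (neighbourhood_family V E) * exp (- (\<alpha> * n / 6)\<^sup>2 / (2 * n)) < 1"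
    using small unfolding n_def by simp
  moreover have "finite (neighbourhood_family V E)" unfolding neighbourhood_family_def using finV by simp
  moreover have "\<forall>N\<in>neighbourhood_family V E. N \<subseteq> V" using neighbourhood_family_subset[OF G] by blast
  moreover have "\<forall>p\<in>matching_parts V M. card p \<le> 2" using card_matching_parts_le_2[OF M] by blast
  moreover have "0 \<le> \<alpha> * n / 6" using \<open>0 \<le> \<alpha>\<close> by simp
  ultimately obtain f where f: "\<forall>N\<in>neighbourhood_family V E.
      \<bar>real (card (N \<inter> \<Union>{p \<in> matching_parts V M. f p})) - card N / 2\<bar> < \<alpha> * n / 6"
    using exists_selection_balancing_family[OF finV \<open>V \<noteq> {}\<close> partition_on_matching_parts[OF M]]
    unfolding n_def by blast
  define S where "S = \<Union>{p \<in> matching_parts V M. f p}"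
  have "S \<subseteq> V" using partition_onD1[OF partition_on_matching_parts[OF M]] unfolding S_def by auto
  have "\<bar>real (card S) - n / 2\<bar> < \<alpha> * n / 6"
    using f \<open>S \<subseteq> V\<close> unfolding neighbourhood_family_def S_def by (simp add: Int_absorb1 n_def)
  moreover have "\<alpha> * n / 6 \<le> n / 6" using \<open>0 \<le> \<alpha>\<close> \<open>\<alpha> \<le> 1\<close> by (simp add: mult_left_le_one_le)
  ultimately have "real (card V) / 3 \<le> card S" "card S \<le> 2 * real (card V) / 3"
    unfolding n_def by linarith+
  then show ?thesis
    using \<open>S \<subseteq> V\<close> semidegrees_into_balanced_split[OF G _ \<open>0 \<le> \<alpha>\<close> deg, of _ S]
      not_separates_Union_selected_matching_parts[OF M, of f] f
    unfolding S_def[symmetric] n_def by blast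
qed

lemma eventually_linear_times_exp_lt_1:
  fixes c :: real
  assumes "c > 0"
  shows "eventually (\<lambda>n. (2 + 4 * real n) * exp (- c * real n) < 1) sequentially"
proof -
  have "((\<lambda>n. (2 + 4 * real n) * exp (- c * real n)) \<longlongrightarrow> 0) sequentially"
    using assms by real_asymp
  then show ?thesis by (rule order_tendstoD) simp
qed

theorem lemma3p5:
  fixes \<alpha> :: real
  assumes "0 < \<alpha>" and "\<alpha> < 1"
  shows "\<exists>n0::nat. \<forall>(V::nat set) E M.
           digraph V E \<and> card V \<ge> n0 \<and> V \<noteq> {} \<and>
           real (min_semidegree V E) \<ge> \<alpha> * real (card V) \<and>
           is_matching_on V M \<longrightarrow>
           (\<exists>S \<subseteq> V.
              real (card V) / 3 \<le> real (card S) \<and> real (card S) \<le> 2 * real (card V) / 3 \<and>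
              (\<forall>x \<in> V.
                 real (outdeg_in E S x) \<ge> \<alpha> * real (card V) / 6 \<and>
                 real (indeg_in E S x) \<ge> \<alpha> * real (card V) / 6 \<and>
                 real (outdeg_in E (V - S) x) \<ge> \<alpha> * real (card V) / 6 \<and>
                 real (indeg_in E (V - S) x) \<ge> \<alpha> * real (card V) / 6) \<and>
              \<not> separates S M)"
proof -
  obtain n0 where n0: "\<And>n. n \<ge> n0 \<Longrightarrow> (2 + 4 * real n) * exp (- (\<alpha>\<^sup>2 / 72) * real n) < 1"
    using eventually_linear_times_exp_lt_1[of "\<alpha>\<^sup>2 / 72"] assms(1)
    unfolding eventually_sequentially by auto
  show ?thesis
  proof (intro exI[of _ n0] allI impI, elim conjE, rule exists_balanced_split_not_separating)
  qed (use n0 assms in auto)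
qed

end
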